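(* Let $k$ be a field, $J,K$ proper monomial ideals in $Q=k[x,y,z]$, and $I=JK$. Then $[I:x]\cdot[I:(y,z)]\subseteq I$.
   Context: For ideals $I,L$ of $Q$, $I:L=\{f\in Q: fL\subseteq I\}$ and $I:f=I:(f)$. *)

theory Defs
  imports "HOL-Library.Poly_Mapping" "HOL-Library.Product_Plus"
begin

text \<open>The polynomial ring Q = k[x,y,z]: finitely supported functions from exponent
  vectors (a,b,c) (standing for x^a y^b z^c) to coefficients, with convolution product.\<close>
type_synonym 'a poly3 = "(nat \<times> nat \<times> nat) \<Rightarrow>\<^sub>0 'a"

definition varX :: "'a::comm_ring_1 poly3" where "varX = Poly_Mapping.single (1,0,0) 1"
definition varY :: "'a::comm_ring_1 poly3" where "varY = Poly_Mapping.single (0,1,0) 1"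
definition varZ :: "'a::comm_ring_1 poly3" where "varZ = Poly_Mapping.single (0,0,1) 1"

definition is_ideal :: "'r::comm_ring_1 set \<Rightarrow> bool" where
  "is_ideal I \<longleftrightarrow> 0 \<in> I \<and> (\<forall>a\<in>I. \<forall>b\<in>I. a + b \<in> I) \<and> (\<forall>r. \<forall>a\<in>I. r * a \<in> I)"

definition ideal_gen :: "'r::comm_ring_1 set \<Rightarrow> 'r set" where
  "ideal_gen S = \<Inter>{I. is_ideal I \<and> S \<subseteq> I}"

definition ideal_prod :: "'r::comm_ring_1 set \<Rightarrow> 'r set \<Rightarrow> 'r set" where
  "ideal_prod A B = ideal_gen {a * b | a b. a \<in> A \<and> b \<in> B}"

definition ideal_colon :: "'r::comm_ring_1 set \<Rightarrow> 'r set \<Rightarrow> 'r set" where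
  "ideal_colon I L = {f. \<forall>g\<in>L. f * g \<in> I}"

definition monomials3 :: "'a::comm_ring_1 poly3 set" where
  "monomials3 = {Poly_Mapping.single \<alpha> 1 | \<alpha>. True}"

definition monomial_ideal :: "'a::comm_ring_1 poly3 set \<Rightarrow> bool" where
  "monomial_ideal I \<longleftrightarrow> (\<exists>M \<subseteq> monomials3. I = ideal_gen M)"

end

theory Submission
  imports Defs "HOL-Library.Set_Algebras"
begin

text \<open>A monomial ideal is the set of polynomials supported on an upward closed set of exponents,
  and the product of two monomial ideals corresponds to the Minkowski sum of their exponent sets.
  For \<open>a \<in> I : x\<close> and \<open>b \<in> I : (y,z)\<close> with \<open>I\<close> supported on \<open>A + B\<close>, every exponent \<open>u\<close>
  of \<open>a\<close> has \<open>u + e\<^sub>1 \<in> A + B\<close>, every exponent \<open>v\<close> of \<open>b\<close> has \<open>v + e\<^sub>2, v + e\<^sub>3 \<in> A + B\<close>, and it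
  remains to see \<open>u + v \<in> A + B\<close>. This is clear unless \<open>u = (u\<^sub>1,0,0)\<close> and \<open>v = (0,v\<^sub>2,v\<^sub>3)\<close>.
  Then, as \<open>0 \<notin> A, B\<close> by properness, \<open>u + e\<^sub>1 = j + k\<close> forces \<open>j, k\<close> to be positive pure powers of
  \<open>x\<close>, and in a decomposition \<open>v + e\<^sub>2 = p + q\<close> one of \<open>p, q\<close> has no \<open>y\<close> at all; swapping it
  against \<open>j\<close> or \<open>k\<close> gives a decomposition below \<open>u + v\<close>.\<close>

definition upward_closed :: "'m::plus set \<Rightarrow> bool" where
  "upward_closed S \<longleftrightarrow> (\<forall>a\<in>S. \<forall>d. a + d \<in> S)"

definition supported_polys :: "'m set \<Rightarrow> ('m \<Rightarrow>\<^sub>0 'a::zero) set" where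
  "supported_polys S = {f. Poly_Mapping.keys f \<subseteq> S}"

lemma upward_closed_set_plus:
  fixes A B :: "'m::comm_monoid_add set"
  assumes "upward_closed A"
  shows "upward_closed (A + B)"
  unfolding upward_closed_def
proof (intro ballI allI)
  fix c d assume "c \<in> A + B"
  then obtain a b where "c = a + b" "a \<in> A" "b \<in> B" by (rule set_plus_elim)
  then have "c + d = (a + d) + b" "a + d \<in> A"
    using assms by (simp_all add: add_ac upward_closed_def)
  with \<open>b \<in> B\<close> show "c + d \<in> A + B" by auto
qed

lemma zero_notin_upward_closed:
  fixes S :: "'m::comm_monoid_add set"
  assumes "upward_closed S" "supported_polys S \<noteq> (UNIV :: ('m \<Rightarrow>\<^sub>0 'a::zero) set)"
  shows "0 \<notin> S"
proof
  assume "0 \<in> S"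
  then have "S = UNIV" using assms(1) unfolding upward_closed_def by force
  then show False using assms(2) by (simp add: supported_polys_def)
qed

lemma is_ideal_ideal_gen: "is_ideal (ideal_gen S)"
  unfolding ideal_gen_def is_ideal_def by auto

lemma ideal_gen_superset: "S \<subseteq> ideal_gen S"
  unfolding ideal_gen_def by auto

lemma ideal_gen_least: "is_ideal I \<Longrightarrow> S \<subseteq> I \<Longrightarrow> ideal_gen S \<subseteq> I"
  unfolding ideal_gen_def by auto

lemma ideal_sum_mem:
  assumes "is_ideal I" "\<And>x. x \<in> A \<Longrightarrow> f x \<in> I"
  shows "sum f A \<in> I"
  using assms(2)
  by (induction A rule: infinite_finite_induct) (use assms(1) in \<open>simp_all add: is_ideal_def\<close>)

lemma is_ideal_supported_polys:
  fixes S :: "'m::comm_monoid_add set"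
  assumes "upward_closed S"
  shows "is_ideal (supported_polys S :: ('m \<Rightarrow>\<^sub>0 'a::comm_ring_1) set)"
  unfolding is_ideal_def supported_polys_def
proof (intro conjI ballI allI; simp)
  fix a b :: "'m \<Rightarrow>\<^sub>0 'a" assume "Poly_Mapping.keys a \<subseteq> S" "Poly_Mapping.keys b \<subseteq> S"
  then show "Poly_Mapping.keys (a + b) \<subseteq> S" using keys_add[of a b] by blast
next
  fix r a :: "'m \<Rightarrow>\<^sub>0 'a" assume a: "Poly_Mapping.keys a \<subseteq> S"
  show "Poly_Mapping.keys (r * a) \<subseteq> S"
  proof
    fix x assume "x \<in> Poly_Mapping.keys (r * a)"
    then obtain p q where "x = p + q" "q \<in> Poly_Mapping.keys a" using keys_mult[of r a] by blast
    then show "x \<in> S" using a assms unfolding upward_closed_def by (metis add.commute subsetD)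
  qed
qed

lemma poly_mapping_eq_sum_singles:
  fixes f :: "'m \<Rightarrow>\<^sub>0 'a::comm_monoid_add"
  shows "f = (\<Sum>a\<in>Poly_Mapping.keys f. Poly_Mapping.single a (Poly_Mapping.lookup f a))"
proof (rule poly_mapping_eqI)
  fix k
  show "Poly_Mapping.lookup f k =
      Poly_Mapping.lookup (\<Sum>a\<in>Poly_Mapping.keys f. Poly_Mapping.single a (Poly_Mapping.lookup f a)) k"
    unfolding lookup_sum lookup_single
    by (cases "k \<in> Poly_Mapping.keys f") (auto simp: when_def in_keys_iff)
qed

lemma supported_polys_subset_ideal:
  fixes I :: "('m::comm_monoid_add \<Rightarrow>\<^sub>0 'a::comm_ring_1) set"
  assumes "is_ideal I" "\<And>a. a \<in> S \<Longrightarrow> Poly_Mapping.single a 1 \<in> I"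
  shows "supported_polys S \<subseteq> I"
proof
  fix f :: "'m \<Rightarrow>\<^sub>0 'a" assume "f \<in> supported_polys S"
  then have keys_f: "Poly_Mapping.keys f \<subseteq> S" by (simp add: supported_polys_def)
  have "(\<Sum>a\<in>Poly_Mapping.keys f. Poly_Mapping.single a (Poly_Mapping.lookup f a)) \<in> I"
  proof (rule ideal_sum_mem[OF assms(1)])
    fix a assume "a \<in> Poly_Mapping.keys f"
    then have "Poly_Mapping.single 0 (Poly_Mapping.lookup f a) * Poly_Mapping.single a 1 \<in> I"
      using keys_f assms unfolding is_ideal_def by blast
    then show "Poly_Mapping.single a (Poly_Mapping.lookup f a) \<in> I" by (simp add: mult_single)
  qed
  then show "f \<in> I" by (subst poly_mapping_eq_sum_singles)
qed

lemma ideal_prod_supported_polys: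
  fixes A B :: "'m::comm_monoid_add set"
  assumes "upward_closed A"
  shows "ideal_prod (supported_polys A) (supported_polys B) =
    (supported_polys (A + B) :: ('m \<Rightarrow>\<^sub>0 'a::comm_ring_1) set)"
    (is "ideal_prod ?JA ?JB = _")
proof
  show "ideal_prod ?JA ?JB \<subseteq> supported_polys (A + B)"
    unfolding ideal_prod_def
  proof (intro ideal_gen_least is_ideal_supported_polys upward_closed_set_plus assms subsetI)
    fix x assume "x \<in> {a * b |a b. a \<in> ?JA \<and> b \<in> ?JB}"
    then obtain a b where "x = a * b" "Poly_Mapping.keys a \<subseteq> A" "Poly_Mapping.keys b \<subseteq> B"
      unfolding supported_polys_def by blast
    then have "Poly_Mapping.keys x \<subseteq> A + B"
      using keys_mult[of a b] by blast
    then show "x \<in> supported_polys (A + B)" by (simp add: supported_polys_def)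
  qed
next
  show "supported_polys (A + B) \<subseteq> ideal_prod ?JA ?JB"
    unfolding ideal_prod_def
  proof (rule supported_polys_subset_ideal[OF is_ideal_ideal_gen])
    fix c assume "c \<in> A + B"
    then obtain a b where ab: "c = a + b" "a \<in> A" "b \<in> B" by (rule set_plus_elim)
    then have "Poly_Mapping.single a 1 \<in> ?JA" "Poly_Mapping.single b 1 \<in> ?JB"
      by (simp_all add: supported_polys_def)
    then have "Poly_Mapping.single a 1 * Poly_Mapping.single b 1 \<in> {a * b |a b. a \<in> ?JA \<and> b \<in> ?JB}"
      by blast
    then show "Poly_Mapping.single c 1 \<in> ideal_gen {a * b |a b. a \<in> ?JA \<and> b \<in> ?JB}"
      using ideal_gen_superset ab(1) by (fastforce simp: mult_single)
  qed
qed

lemma lookup_times_single_one: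
  fixes f :: "'m::cancel_comm_monoid_add \<Rightarrow>\<^sub>0 'a::comm_ring_1"
  shows "Poly_Mapping.lookup (f * Poly_Mapping.single e 1) (b + e) = Poly_Mapping.lookup f b"
proof -
  have "f * Poly_Mapping.single e 1 =
      (\<Sum>a\<in>Poly_Mapping.keys f. Poly_Mapping.single (a + e) (Poly_Mapping.lookup f a))"
    by (subst poly_mapping_eq_sum_singles[of f]) (simp add: sum_distrib_right mult_single)
  then have "Poly_Mapping.lookup (f * Poly_Mapping.single e 1) (b + e) =
      (\<Sum>a\<in>Poly_Mapping.keys f. Poly_Mapping.lookup f a when a = b)"
    by (simp add: lookup_sum lookup_single)
  also have "\<dots> = Poly_Mapping.lookup f b"
    by (cases "b \<in> Poly_Mapping.keys f") (auto simp: when_def in_keys_iff)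
  finally show ?thesis .
qed

lemma colon_supported_polys_keys:
  fixes f :: "'m::cancel_comm_monoid_add \<Rightarrow>\<^sub>0 'a::comm_ring_1"
  assumes "f \<in> ideal_colon (supported_polys S) L" "Poly_Mapping.single e 1 \<in> L"
    and "p \<in> Poly_Mapping.keys f"
  shows "p + e \<in> S"
proof -
  have "f * Poly_Mapping.single e 1 \<in> supported_polys S"
    using assms(1,2) by (simp add: ideal_colon_def)
  moreover have "p + e \<in> Poly_Mapping.keys (f * Poly_Mapping.single e 1)"
    using assms(3) by (simp add: in_keys_iff lookup_times_single_one)
  ultimately show ?thesis by (auto simp: supported_polys_def)
qed

lemma monomial_ideal_eq_supported_polys:
  fixes J :: "'a::comm_ring_1 poly3 set"
  assumes "monomial_ideal J"
  obtains S where "upward_closed S" "J = supported_polys S"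
proof -
  obtain M where M: "M \<subseteq> monomials3" "J = ideal_gen M"
    using assms unfolding monomial_ideal_def by blast
  define E where "E = {e. Poly_Mapping.single e (1::'a) \<in> M}"
  define S where "S = UNIV + E"
  have up: "upward_closed S"
    unfolding S_def by (rule upward_closed_set_plus) (simp add: upward_closed_def)
  have M_eq: "M = (\<lambda>e. Poly_Mapping.single e 1) ` E"
    using M(1) unfolding E_def monomials3_def by auto
  have "J \<subseteq> supported_polys S"
    unfolding M(2)
  proof (intro ideal_gen_least is_ideal_supported_polys up)
    have "E \<subseteq> S" unfolding S_def using set_plus_intro[of 0 UNIV _ E] by force
    then show "M \<subseteq> supported_polys S" by (auto simp: M_eq supported_polys_def)
  qed
  moreover have "supported_polys S \<subseteq> J"
    unfolding M(2)
  proof (rule supported_polys_subset_ideal[OF is_ideal_ideal_gen])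
    fix a assume "a \<in> S"
    then obtain d e where ed: "a = d + e" "Poly_Mapping.single e (1::'a) \<in> M"
      unfolding S_def E_def by (auto elim: set_plus_elim)
    then have "Poly_Mapping.single d 1 * Poly_Mapping.single e (1::'a) \<in> ideal_gen M"
      using is_ideal_ideal_gen[of M] ideal_gen_superset[of M] unfolding is_ideal_def by blast
    then show "Poly_Mapping.single a 1 \<in> ideal_gen M" using ed by (simp add: mult_single)
  qed
  ultimately show ?thesis using that up by blast
qed

lemma set_plus_dominated:
  fixes A B :: "(nat \<times> nat \<times> nat) set"
  assumes "upward_closed A" "(j1,j2,j3) \<in> A" "(k1,k2,k3) \<in> B"
    and "j1 + k1 \<le> a1" "j2 + k2 \<le> a2" "j3 + k3 \<le> a3"
  shows "(a1,a2,a3) \<in> A + B"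
proof -
  have "(j1,j2,j3) + (a1-j1-k1, a2-j2-k2, a3-j3-k3) \<in> A"
    using assms(1,2) unfolding upward_closed_def by blast
  moreover have "(a1,a2,a3) = ((j1,j2,j3) + (a1-j1-k1, a2-j2-k2, a3-j3-k3)) + (k1,k2,k3)"
    using assms(4-6) by simp
  ultimately show ?thesis using assms(3) by (metis set_plus_intro)
qed

lemma set_plus_triple_elim:
  assumes "(a1,a2,a3) \<in> A + B"
  obtains j1 j2 j3 k1 k2 k3 where "(j1,j2,j3) \<in> A" "(k1,k2,k3) \<in> B"
    "a1 = j1 + k1" "a2 = j2 + k2" "a3 = j3 + k3"
  using assms by (auto elim!: set_plus_elim)

lemma set_plus_colon_exponents:
  fixes A B :: "(nat \<times> nat \<times> nat) set"
  assumes A: "upward_closed A" and A0: "0 \<notin> A" and B0: "0 \<notin> B"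
    and hu: "(u1,u2,u3) + (1,0,0) \<in> A + B"
    and hv2: "(v1,v2,v3) + (0,1,0) \<in> A + B"
    and hv3: "(v1,v2,v3) + (0,0,1) \<in> A + B"
  shows "(u1,u2,u3) + (v1,v2,v3) \<in> A + B"
proof -
  from hu obtain j1 j2 j3 k1 k2 k3 where j: "(j1,j2,j3) \<in> A" and k: "(k1,k2,k3) \<in> B"
    and e: "u1 + 1 = j1 + k1" "u2 = j2 + k2" "u3 = j3 + k3"
    by (auto elim!: set_plus_triple_elim)
  from hv2 obtain p1 p2 p3 q1 q2 q3 where p: "(p1,p2,p3) \<in> A" and q: "(q1,q2,q3) \<in> B"
    and f: "v1 = p1 + q1" "v2 + 1 = p2 + q2" "v3 = p3 + q3"
    by (auto elim!: set_plus_triple_elim)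
  from hv3 obtain r1 r2 r3 s1 s2 s3 where r: "(r1,r2,r3) \<in> A" and s: "(s1,s2,s3) \<in> B"
    and g: "v1 = r1 + s1" "v2 = r2 + s2" "v3 + 1 = r3 + s3"
    by (auto elim!: set_plus_triple_elim)
  consider "v1 \<ge> 1" | "u2 \<ge> 1" | "u3 \<ge> 1" | "v1 = 0" "u2 = 0" "u3 = 0" by linarith
  then show ?thesis
  proof cases
    case 1 then show ?thesis using set_plus_dominated[OF A j k] e by simp
  next
    case 2 then show ?thesis using set_plus_dominated[OF A p q] f by simp
  next
    case 3 then show ?thesis using set_plus_dominated[OF A r s] g by simp
  next
    case 4
    have "j1 \<ge> 1" using j A0 e 4 by (cases j1) (auto simp: zero_prod_def)
    have "k1 \<ge> 1" using k B0 e 4 by (cases k1) (auto simp: zero_prod_def)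
    show ?thesis
    proof (cases "q2 \<ge> 1")
      case True
      then show ?thesis using set_plus_dominated[OF A p k] e f 4 \<open>j1 \<ge> 1\<close> by simp
    next
      case False
      then show ?thesis using set_plus_dominated[OF A j q] e f 4 \<open>k1 \<ge> 1\<close> by simp
    qed
  qed
qed

lemma ideal_prod_colon_x_colon_yz_subset:
  fixes A B :: "(nat \<times> nat \<times> nat) set"
  assumes A: "upward_closed A" "0 \<notin> A" and "0 \<notin> B"
    and I: "I = (supported_polys (A + B) :: 'a::comm_ring_1 poly3 set)"
  shows "ideal_prod (ideal_colon I (ideal_gen {varX}))
                    (ideal_colon I (ideal_gen {varY, varZ})) \<subseteq> I"
proof -
  have "a * b \<in> I" if a: "a \<in> ideal_colon I (ideal_gen {varX})"
    and b: "b \<in> ideal_colon I (ideal_gen {varY, varZ})" for a b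
  proof -
    have "p + q \<in> A + B" if "p \<in> Poly_Mapping.keys a" "q \<in> Poly_Mapping.keys b" for p q
    proof -
      have "varX \<in> ideal_gen {varX}" "varY \<in> ideal_gen {varY, varZ}" "varZ \<in> ideal_gen {varY, varZ}"
        using ideal_gen_superset by blast+
      then have "p + (1,0,0) \<in> A + B" "q + (0,1,0) \<in> A + B" "q + (0,0,1) \<in> A + B"
        using colon_supported_polys_keys[OF a[unfolded I] _ \<open>p \<in> _\<close>]
          colon_supported_polys_keys[OF b[unfolded I] _ \<open>q \<in> _\<close>]
        unfolding varX_def varY_def varZ_def by blast+
      moreover obtain u1 u2 u3 v1 v2 v3 where "p = (u1,u2,u3)" "q = (v1,v2,v3)"
        by (metis prod_cases3)
      ultimately show ?thesis
        using set_plus_colon_exponents[OF A \<open>0 \<notin> B\<close>] by simp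
    qed
    then show ?thesis
      using keys_mult[of a b] by (fastforce simp: I supported_polys_def)
  qed
  then show ?thesis
    unfolding ideal_prod_def I
    by (intro ideal_gen_least is_ideal_supported_polys upward_closed_set_plus A(1)) blast
qed

theorem mainTheorem6:
  fixes J K I :: "'k::field poly3 set"
  assumes "monomial_ideal J" and "monomial_ideal K"
    and "J \<noteq> UNIV" and "K \<noteq> UNIV"
    and "I = ideal_prod J K"
  shows "ideal_prod (ideal_colon I (ideal_gen {varX}))
                    (ideal_colon I (ideal_gen {varY, varZ})) \<subseteq> I"
proof -
  obtain A where A: "upward_closed A" "J = supported_polys A"
    using assms(1) by (rule monomial_ideal_eq_supported_polys)
  obtain B where B: "upward_closed B" "K = supported_polys B"
    using assms(2) by (rule monomial_ideal_eq_supported_polys)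
  have "0 \<notin> A" "0 \<notin> B"
    using zero_notin_upward_closed[OF A(1)] zero_notin_upward_closed[OF B(1)] A(2) B(2) assms(3,4)
    by blast+
  moreover have "I = supported_polys (A + B)"
    using assms(5) ideal_prod_supported_polys[OF A(1)] by (simp add: A(2) B(2))
  ultimately show ?thesis
    using ideal_prod_colon_x_colon_yz_subset[OF A(1)] by blast
qed

end
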